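(* Let $\mathcal{H}=\bigotimes_{i=1}^m\mathcal{H}_i$ and let $S$ be an unextendible product basis of $\mathcal{H}$. Then $S$ is not completable even in a locally extended Hilbert space: for no choice of finite-dimensional spaces $\mathcal{H}_i'$ does there exist a set of pairwise orthogonal product states of $\mathcal{H}'=\bigotimes_{i=1}^m(\mathcal{H}_i\oplus\mathcal{H}_i')$, orthogonal to all elements of $S$, which together with $S$ forms an orthogonal basis of $\mathcal{H}'$.
   Context: A product state in a multipartite space $\bigotimes_i \mathcal{K}_i$ is a vector $\phi_1\otimes\cdots\otimes\phi_m$ with nonzero $\phi_i\in\mathcal{K}_i$. An (incomplete orthogonal) product basis is a set $S$ of pairwise orthogonal product states spanning a proper subspace $\mathcal{H}_S$ of $\mathcal{H}$; it is unextendible if $\mathcal{H}_S^\perp$ contains no product state. Elements of $\mathcal{H}$ are regarded as elements of $\mathcal{H}'$ via the natural inclusions $\mathcal{H}_i\subseteq\mathcal{H}_i\oplus\mathcal{H}_i'$. *)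

theory Defs
  imports Main "HOL-Library.Complex_Order" Complex_Main
begin

text \<open>Multipartite space \<open>H = C^{d 0} \<otimes> ... \<otimes> C^{d (m-1)}\<close>, realized concretely:
  a vector is a complex function on index tuples \<open>t :: nat \<Rightarrow> nat\<close>, supported on the box
  \<open>tuples d m\<close>.  Local factor \<open>H_i = C^{d i}\<close> is the set of \<open>nat \<Rightarrow> complex\<close> functions supported
  on \<open>{0..<d i}\<close>.  The local extension \<open>H_i \<oplus> H_i' = C^{d i + e i}\<close> contains \<open>H_i\<close> as the first
  \<open>d i\<close> coordinates, so the natural inclusion \<open>H \<subseteq> H'\<close> is the identity on functions.\<close>

definition tuples :: "(nat \<Rightarrow> nat) \<Rightarrow> nat \<Rightarrow> (nat \<Rightarrow> nat) set" where
  "tuples d m = {t. (\<forall>i<m. t i < d i) \<and> (\<forall>i\<ge>m. t i = 0)}"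

definition mspace :: "(nat \<Rightarrow> nat) \<Rightarrow> nat \<Rightarrow> ((nat \<Rightarrow> nat) \<Rightarrow> complex) set" where
  "mspace d m = {x. \<forall>t. t \<notin> tuples d m \<longrightarrow> x t = 0}"

definition lspace :: "nat \<Rightarrow> (nat \<Rightarrow> complex) set" where
  "lspace n = {\<phi>. \<forall>j\<ge>n. \<phi> j = 0}"

definition ip :: "(nat \<Rightarrow> nat) \<Rightarrow> nat \<Rightarrow> ((nat \<Rightarrow> nat) \<Rightarrow> complex) \<Rightarrow> ((nat \<Rightarrow> nat) \<Rightarrow> complex) \<Rightarrow> complex" where
  "ip d m x y = (\<Sum>t\<in>tuples d m. cnj (x t) * y t)"

definition tensor :: "nat \<Rightarrow> (nat \<Rightarrow> nat \<Rightarrow> complex) \<Rightarrow> ((nat \<Rightarrow> nat) \<Rightarrow> complex)" where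
  "tensor m \<phi> = (\<lambda>t. if (\<forall>i\<ge>m. t i = 0) then (\<Prod>i<m. \<phi> i (t i)) else 0)"

definition product_state :: "(nat \<Rightarrow> nat) \<Rightarrow> nat \<Rightarrow> ((nat \<Rightarrow> nat) \<Rightarrow> complex) \<Rightarrow> bool" where
  "product_state d m x \<longleftrightarrow>
     (\<exists>\<phi>. (\<forall>i<m. \<phi> i \<in> lspace (d i) \<and> \<phi> i \<noteq> (\<lambda>_. 0)) \<and> x = tensor m \<phi>)"

definition pairwise_orth :: "(nat \<Rightarrow> nat) \<Rightarrow> nat \<Rightarrow> ((nat \<Rightarrow> nat) \<Rightarrow> complex) set \<Rightarrow> bool" where
  "pairwise_orth d m S \<longleftrightarrow> (\<forall>x\<in>S. \<forall>y\<in>S. x \<noteq> y \<longrightarrow> ip d m x y = 0)"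

definition cspan :: "((nat \<Rightarrow> nat) \<Rightarrow> complex) set \<Rightarrow> ((nat \<Rightarrow> nat) \<Rightarrow> complex) set" where
  "cspan B = {x. \<exists>F c. finite F \<and> F \<subseteq> B \<and> x = (\<lambda>t. \<Sum>v\<in>F. c v * v t)}"

definition product_basis :: "(nat \<Rightarrow> nat) \<Rightarrow> nat \<Rightarrow> ((nat \<Rightarrow> nat) \<Rightarrow> complex) set \<Rightarrow> bool" where
  "product_basis d m S \<longleftrightarrow>
     (\<forall>x\<in>S. product_state d m x) \<and> pairwise_orth d m S \<and> cspan S \<noteq> mspace d m"

definition UPB :: "(nat \<Rightarrow> nat) \<Rightarrow> nat \<Rightarrow> ((nat \<Rightarrow> nat) \<Rightarrow> complex) set \<Rightarrow> bool" where
  "UPB d m S \<longleftrightarrow> product_basis d m S \<and>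
     \<not> (\<exists>y. product_state d m y \<and> (\<forall>x\<in>S. ip d m x y = 0))"

definition orth_basis :: "(nat \<Rightarrow> nat) \<Rightarrow> nat \<Rightarrow> ((nat \<Rightarrow> nat) \<Rightarrow> complex) set \<Rightarrow> bool" where
  "orth_basis d m B \<longleftrightarrow> B \<subseteq> mspace d m \<and> (\<forall>x\<in>B. x \<noteq> (\<lambda>_. 0)) \<and>
     pairwise_orth d m B \<and> cspan B = mspace d m"

end

theory Submission
  imports Defs "HOL-Library.FuncSet"
begin

text \<open>Let \<open>P\<close> be the coordinate projection of the extended space onto the original box.
  It fixes every element of \<open>S\<close>. A product state \<open>y\<close> of the extended space orthogonal to \<open>S\<close>
  is mapped by \<open>P\<close> to the tensor product of the truncated local factors; this is either zero or a
  product state of the original space, still orthogonal to \<open>S\<close>, which unextendibility forbids.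
  Hence \<open>P\<close> kills all added states, so if \<open>S \<union> T\<close> spanned the extended space, then \<open>P\<close> would
  map that span onto the original space and into \<open>cspan S\<close>, contradicting that \<open>S\<close> spans a proper
  subspace.\<close>

definition box_proj :: "(nat \<Rightarrow> nat) \<Rightarrow> nat \<Rightarrow> ((nat \<Rightarrow> nat) \<Rightarrow> complex) \<Rightarrow> ((nat \<Rightarrow> nat) \<Rightarrow> complex)" where
  "box_proj d m x = (\<lambda>t. if t \<in> tuples d m then x t else 0)"

lemma finite_tuples: "finite (tuples d m)"
proof -
  let ?ext = "\<lambda>f i. if i < m then f i else 0"
  have "tuples d m \<subseteq> ?ext ` (PiE {..<m} (\<lambda>i. {..<d i}))"
  proof
    fix t assume t: "t \<in> tuples d m"
    then have "restrict t {..<m} \<in> PiE {..<m} (\<lambda>i. {..<d i})" "t = ?ext (restrict t {..<m})"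
      by (auto simp: tuples_def)
    then show "t \<in> ?ext ` (PiE {..<m} (\<lambda>i. {..<d i}))" by blast
  qed
  then show ?thesis by (rule finite_subset) (intro finite_imageI finite_PiE; simp)
qed

lemma tuples_mono: "d \<le> D \<Longrightarrow> tuples d m \<subseteq> tuples D m"
  by (auto simp: tuples_def le_fun_def intro: less_le_trans)

lemma mspace_mono: "d \<le> D \<Longrightarrow> mspace d m \<subseteq> mspace D m"
  using tuples_mono unfolding mspace_def by blast

lemma tensor_eq_zero:
  assumes "i < m" "\<phi> i = (\<lambda>_. 0)"
  shows "tensor m \<phi> = (\<lambda>_. 0)"
proof
  fix t
  have "(\<Prod>i<m. \<phi> i (t i)) = 0"
    using assms by (intro prod_zero) (auto intro!: bexI[of _ i])
  then show "tensor m \<phi> t = 0" by (simp add: tensor_def)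
qed

lemma tensor_in_mspace:
  assumes "\<forall>i<m. \<phi> i \<in> lspace (d i)"
  shows "tensor m \<phi> \<in> mspace d m"
  unfolding mspace_def
proof (intro CollectI allI impI)
  fix t assume t: "t \<notin> tuples d m"
  show "tensor m \<phi> t = 0"
  proof (cases "\<forall>i\<ge>m. t i = 0")
    case True
    then obtain i where i: "i < m" "d i \<le> t i" using t by (auto simp: tuples_def not_less)
    then have "\<phi> i (t i) = 0" using assms by (auto simp: lspace_def)
    then have "(\<Prod>i<m. \<phi> i (t i)) = 0" using i by (intro prod_zero) auto
    then show ?thesis using True by (simp add: tensor_def)
  next
    case False
    then show ?thesis unfolding tensor_def if_not_P[OF False] by simp
  qed
qed

lemma product_state_in_mspace: "product_state d m x \<Longrightarrow> x \<in> mspace d m"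
  by (auto simp: product_state_def intro: tensor_in_mspace)

lemma cspan_subset_mspace:
  assumes "B \<subseteq> mspace d m"
  shows "cspan B \<subseteq> mspace d m"
proof
  fix x assume "x \<in> cspan B"
  then obtain F c where F: "F \<subseteq> B" and x: "x = (\<lambda>t. \<Sum>v\<in>F. c v * v t)"
    by (auto simp: cspan_def)
  show "x \<in> mspace d m"
    using F assms unfolding x mspace_def by (auto intro!: sum.neutral)
qed

lemma box_proj_mspace: "x \<in> mspace d m \<Longrightarrow> box_proj d m x = x"
  by (auto simp: box_proj_def mspace_def)

lemma box_proj_tensor:
  "box_proj d m (tensor m \<phi>) = tensor m (\<lambda>i j. if j < d i then \<phi> i j else 0)"
  (is "_ = tensor m ?\<psi>")
proof
  fix t
  show "box_proj d m (tensor m \<phi>) t = tensor m ?\<psi> t"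
  proof (cases "t \<in> tuples d m")
    case True
    then have "(\<Prod>i<m. ?\<psi> i (t i)) = (\<Prod>i<m. \<phi> i (t i))"
      by (intro prod.cong) (auto simp: tuples_def)
    moreover have "\<forall>i\<ge>m. t i = 0" using True by (simp add: tuples_def)
    ultimately show ?thesis using True by (simp add: box_proj_def tensor_def)
  next
    case False
    have "?\<psi> i \<in> lspace (d i)" for i by (simp add: lspace_def)
    then have "tensor m ?\<psi> t = 0"
      using tensor_in_mspace[of m ?\<psi> d] False by (simp add: mspace_def)
    then show ?thesis using False by (simp add: box_proj_def)
  qed
qed

lemma box_proj_product_state:
  assumes "product_state D m y"
  shows "box_proj d m y = (\<lambda>_. 0) \<or> product_state d m (box_proj d m y)"
proof -
  obtain \<phi> where y: "y = tensor m \<phi>"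
    using assms by (auto simp: product_state_def)
  define \<psi> where "\<psi> = (\<lambda>i j. if j < d i then \<phi> i j else (0::complex))"
  have proj: "box_proj d m y = tensor m \<psi>"
    unfolding y \<psi>_def by (rule box_proj_tensor)
  have "\<forall>i<m. \<psi> i \<in> lspace (d i)" by (simp add: \<psi>_def lspace_def)
  then show ?thesis
    unfolding proj product_state_def using tensor_eq_zero by blast
qed

lemma ip_box_proj:
  assumes "d \<le> D" "x \<in> mspace d m"
  shows "ip d m x (box_proj d m y) = ip D m x y"
proof -
  have "ip d m x (box_proj d m y) = (\<Sum>t\<in>tuples d m. cnj (x t) * y t)"
    unfolding ip_def box_proj_def by simp
  also have "\<dots> = ip D m x y"
    unfolding ip_def using finite_tuples tuples_mono[OF assms(1)] assms(2)
    by (intro sum.mono_neutral_left) (auto simp: mspace_def)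
  finally show ?thesis .
qed

lemma UPB_box_proj_orthogonal_product_state:
  assumes "UPB d m S" "d \<le> D"
    and "product_state D m y" "\<forall>x\<in>S. ip D m x y = 0"
  shows "box_proj d m y = (\<lambda>_. 0)"
proof -
  have "\<forall>x\<in>S. ip d m x (box_proj d m y) = 0"
  proof
    fix x assume "x \<in> S"
    then have "x \<in> mspace d m"
      using assms(1) product_state_in_mspace by (auto simp: UPB_def product_basis_def)
    then show "ip d m x (box_proj d m y) = 0"
      using ip_box_proj[OF assms(2)] assms(4) \<open>x \<in> S\<close> by simp
  qed
  then have "\<not> product_state d m (box_proj d m y)"
    using assms(1) by (auto simp: UPB_def)
  then show ?thesis
    using box_proj_product_state[OF assms(3)] by blast
qed

lemma mspace_Int_cspan_Un_subset:
  assumes "S \<subseteq> mspace d m" "\<forall>y\<in>T. box_proj d m y = (\<lambda>_. 0)"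
  shows "mspace d m \<inter> cspan (S \<union> T) \<subseteq> cspan S"
proof
  fix w assume "w \<in> mspace d m \<inter> cspan (S \<union> T)"
  then obtain F c where w: "w \<in> mspace d m" and F: "finite F" "F \<subseteq> S \<union> T"
    and wF: "w = (\<lambda>t. \<Sum>v\<in>F. c v * v t)"
    by (auto simp: cspan_def)
  have "w = (\<lambda>t. \<Sum>v\<in>F \<inter> S. c v * v t)"
  proof
    fix t
    have "w t = box_proj d m w t" using box_proj_mspace[OF w] by simp
    also have "\<dots> = (\<Sum>v\<in>F. c v * box_proj d m v t)"
      unfolding wF box_proj_def by simp
    also have "\<dots> = (\<Sum>v\<in>F \<inter> S. c v * box_proj d m v t)"
      using F assms(2) by (intro sum.mono_neutral_right) auto
    also have "\<dots> = (\<Sum>v\<in>F \<inter> S. c v * v t)"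
      using assms(1) box_proj_mspace by (intro sum.cong) auto
    finally show "w t = (\<Sum>v\<in>F \<inter> S. c v * v t)" .
  qed
  then show "w \<in> cspan S"
    unfolding cspan_def using F(1) by blast
qed

theorem lemma2:
  fixes d :: "nat \<Rightarrow> nat" and m :: nat
    and S :: "((nat \<Rightarrow> nat) \<Rightarrow> complex) set"
  assumes "UPB d m S"
  shows "\<not> (\<exists>(e :: nat \<Rightarrow> nat) T.
              (\<forall>y\<in>T. product_state (\<lambda>i. d i + e i) m y) \<and>
              pairwise_orth (\<lambda>i. d i + e i) m T \<and>
              (\<forall>y\<in>T. \<forall>x\<in>S. ip (\<lambda>i. d i + e i) m x y = 0) \<and>
              orth_basis (\<lambda>i. d i + e i) m (S \<union> T))"
proof
  assume "\<exists>(e :: nat \<Rightarrow> nat) T.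
              (\<forall>y\<in>T. product_state (\<lambda>i. d i + e i) m y) \<and>
              pairwise_orth (\<lambda>i. d i + e i) m T \<and>
              (\<forall>y\<in>T. \<forall>x\<in>S. ip (\<lambda>i. d i + e i) m x y = 0) \<and>
              orth_basis (\<lambda>i. d i + e i) m (S \<union> T)"
  then obtain e T where T: "\<forall>y\<in>T. product_state (\<lambda>i. d i + e i) m y"
      "\<forall>y\<in>T. \<forall>x\<in>S. ip (\<lambda>i. d i + e i) m x y = 0"
    and span: "cspan (S \<union> T) = mspace (\<lambda>i. d i + e i) m"
    by (auto simp: orth_basis_def)
  have le: "d \<le> (\<lambda>i. d i + e i)" by (simp add: le_fun_def)
  have S: "S \<subseteq> mspace d m"
    using assms product_state_in_mspace by (auto simp: UPB_def product_basis_def)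
  have "\<forall>y\<in>T. box_proj d m y = (\<lambda>_. 0)"
    using UPB_box_proj_orthogonal_product_state[OF assms le] T by blast
  then have "mspace d m \<subseteq> cspan S"
    using mspace_Int_cspan_Un_subset[OF S] mspace_mono[OF le] span by blast
  with cspan_subset_mspace[OF S] have "cspan S = mspace d m" by blast
  with assms show False by (simp add: UPB_def product_basis_def)
qed

end
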